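(* Let $T:\mathcal{M}_2\to\mathcal{M}_2$ be a random Pauli channel $T(\rho)=p_1\sigma_1\rho\sigma_1+p_2\sigma_2\rho\sigma_2+p_3\sigma_3\rho\sigma_3+(1-p_1-p_2-p_3)\rho$ and $\mathcal{L}=T-\text{id}_2$. Then $$\alpha_2(\mathcal{L})=2\min\{p_1+p_2,\,p_2+p_3,\,p_3+p_1\}.$$
   Context: $(p_1,p_2,p_3,1-p_1-p_2-p_3)$ is a probability distribution and $\sigma_1,\sigma_2,\sigma_3$ are the Pauli matrices. $\alpha_2(\mathcal{L})=\inf_{X>0}\mathcal{E}^2_{\mathcal{L}}(X)/\text{Ent}_2(X)$ over positive definite $X\in\mathcal{M}_2$, with $\mathcal{E}^2_{\mathcal{L}}(X)=-\frac12\text{tr}[\mathcal{L}(X)X]$ and $\text{Ent}_2(X)=\frac14\text{tr}[X^2(\log\frac{X^2}{\text{tr}(X^2)}+\log2)]$. *)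

theory Defs
  imports "HOL-Analysis.Analysis" "Jordan_Normal_Form.Schur_Decomposition"
begin

definition mtrace :: "complex mat \<Rightarrow> complex" where
  "mtrace A = (\<Sum>i<dim_row A. A $$ (i, i))"

definition unitary_mat :: "nat \<Rightarrow> complex mat \<Rightarrow> bool" where
  "unitary_mat n U \<longleftrightarrow> U \<in> carrier_mat n n \<and> mat_adjoint U * U = 1\<^sub>m n"

definition hermitian_mat :: "nat \<Rightarrow> complex mat \<Rightarrow> bool" where
  "hermitian_mat n A \<longleftrightarrow> A \<in> carrier_mat n n \<and> mat_adjoint A = A"

definition posdef_mat :: "nat \<Rightarrow> complex mat \<Rightarrow> bool" where
  "posdef_mat n X \<longleftrightarrow> hermitian_mat n X \<and>
     (\<forall>v \<in> carrier_vec n. v \<noteq> 0\<^sub>v n \<longrightarrow> Re (conjugate v \<bullet> (X *\<^sub>v v)) > 0)"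

definition herm_fun :: "nat \<Rightarrow> (real \<Rightarrow> real) \<Rightarrow> complex mat \<Rightarrow> complex mat" where
  "herm_fun n f A = (SOME B. \<exists>U d. unitary_mat n U \<and>
       A = U * mat_diag n (\<lambda>i. complex_of_real (d i)) * mat_adjoint U \<and>
       B = U * mat_diag n (\<lambda>i. complex_of_real (f (d i))) * mat_adjoint U)"

definition mat_log :: "nat \<Rightarrow> complex mat \<Rightarrow> complex mat" where
  "mat_log n A = herm_fun n ln A"

definition sigma1 :: "complex mat" where
  "sigma1 = mat_of_rows_list 2 [[0, 1], [1, 0]]"

definition sigma2 :: "complex mat" where
  "sigma2 = mat_of_rows_list 2 [[0, -\<i>], [\<i>, 0]]"

definition sigma3 :: "complex mat" where
  "sigma3 = mat_of_rows_list 2 [[1, 0], [0, -1]]"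

definition pauli_channel :: "real \<Rightarrow> real \<Rightarrow> real \<Rightarrow> complex mat \<Rightarrow> complex mat" where
  "pauli_channel p1 p2 p3 \<rho> =
      complex_of_real p1 \<cdot>\<^sub>m (sigma1 * \<rho> * sigma1)
    + complex_of_real p2 \<cdot>\<^sub>m (sigma2 * \<rho> * sigma2)
    + complex_of_real p3 \<cdot>\<^sub>m (sigma3 * \<rho> * sigma3)
    + complex_of_real (1 - p1 - p2 - p3) \<cdot>\<^sub>m \<rho>"

definition pauli_generator :: "real \<Rightarrow> real \<Rightarrow> real \<Rightarrow> complex mat \<Rightarrow> complex mat" where
  "pauli_generator p1 p2 p3 X = pauli_channel p1 p2 p3 X - X"

definition dirichlet2 :: "(complex mat \<Rightarrow> complex mat) \<Rightarrow> complex mat \<Rightarrow> real" where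
  "dirichlet2 L X = - (1/2) * Re (mtrace (L X * X))"

definition ent2 :: "complex mat \<Rightarrow> real" where
  "ent2 X = (1/4) * Re (mtrace (X * X *
      (mat_log 2 ((1 / mtrace (X * X)) \<cdot>\<^sub>m (X * X)) + complex_of_real (ln 2) \<cdot>\<^sub>m 1\<^sub>m 2)))"

text \<open>alpha_2(L): infimum of the ratio over positive definite 2x2 X.  Matrices with
  Ent_2(X) = 0 (the scalar multiples of the identity, where the ratio is 0/0) are excluded.\<close>
definition alpha2 :: "(complex mat \<Rightarrow> complex mat) \<Rightarrow> real" where
  "alpha2 L = Inf {dirichlet2 L X / ent2 X | X. posdef_mat 2 X \<and> ent2 X \<noteq> 0}"

end

theory Submission
  imports Defs "HOL-Real_Asymp.Real_Asymp"
begin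

text \<open>Every positive definite \<open>X\<close> is \<open>a\<one> + x\<sigma>\<^sub>1 + y\<sigma>\<^sub>2 + z\<sigma>\<^sub>3\<close> with \<open>r = |(x,y,z)| < a\<close>.
  On such \<open>X\<close> the Dirichlet form of \<open>\<L>\<close> is \<open>2((p\<^sub>2+p\<^sub>3)x\<^sup>2 + (p\<^sub>1+p\<^sub>3)y\<^sup>2 + (p\<^sub>1+p\<^sub>2)z\<^sup>2) \<ge> 2 m r\<^sup>2\<close>,
  where \<open>m\<close> is the minimum in the theorem.  Since \<open>X\<^sup>2\<close> has eigenvalues \<open>(a \<plusminus> r)\<^sup>2\<close>, the
  2-entropy is \<open>a\<^sup>2 \<phi>(r/a)\<close> for an explicit profile \<open>\<phi>\<close> with \<open>0 \<le> \<phi>(t) \<le> t\<^sup>2\<close>, so every ratio is at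
  least \<open>2m\<close>.  As \<open>\<phi>(t) \<sim> t\<^sup>2\<close> for \<open>t \<rightarrow> 0\<close>, the ratio at \<open>X = \<one> + t\<sigma>\<^sub>k\<close> tends to twice the
  \<open>k\<close>-th coefficient of the quadratic form, so the infimum is exactly \<open>2m\<close>.\<close>

definition mat2 :: "complex \<Rightarrow> complex \<Rightarrow> complex \<Rightarrow> complex \<Rightarrow> complex mat" where
  "mat2 a b c d = Matrix.mat 2 2 (\<lambda>(i,j). if i = 0 then (if j = 0 then a else b) else (if j = 0 then c else d))"

lemma mat2_carrier [simp]: "mat2 a b c d \<in> carrier_mat 2 2"
  and mat2_dim [simp]: "dim_row (mat2 a b c d) = 2" "dim_col (mat2 a b c d) = 2"
  by (auto simp: mat2_def)

lemma mat2_index [simp]: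
  "mat2 a b c d $$ (0,0) = a" "mat2 a b c d $$ (0,1) = b"
  "mat2 a b c d $$ (1,0) = c" "mat2 a b c d $$ (1,1) = d"
  by (auto simp: mat2_def)

lemma less_2_iff: "(i::nat) < 2 \<longleftrightarrow> i = 0 \<or> i = 1"
  by auto

lemma sum_lessThan_2: "(\<Sum>i<2::nat. f i) = f 0 + f 1"
  by (simp add: numeral_2_eq_2)

lemma sum_atLeast0LessThan_2: "(\<Sum>i\<in>{0..<2::nat}. f i) = f 0 + f 1"
  by (simp add: numeral_2_eq_2)

lemma mat2_eta:
  assumes "A \<in> carrier_mat 2 2"
  shows "A = mat2 (A $$ (0,0)) (A $$ (0,1)) (A $$ (1,0)) (A $$ (1,1))"
  by (rule eq_matI) (use assms in \<open>auto simp: mat2_def less_2_iff\<close>)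

lemma mat2_eq_iff: "mat2 a b c d = mat2 a' b' c' d' \<longleftrightarrow> a = a' \<and> b = b' \<and> c = c' \<and> d = d'"
  by (metis mat2_index)

lemma mat2_mult [simp]:
  "mat2 a b c d * mat2 e f g h = mat2 (a * e + b * g) (a * f + b * h) (c * e + d * g) (c * f + d * h)"
  by (rule eq_matI) (auto simp: mat2_def less_2_iff scalar_prod_def sum_atLeast0LessThan_2)

lemma mat2_add [simp]: "mat2 a b c d + mat2 e f g h = mat2 (a+e) (b+f) (c+g) (d+h)"
  by (rule eq_matI) (auto simp: mat2_def less_2_iff)

lemma mat2_minus [simp]: "mat2 a b c d - mat2 e f g h = mat2 (a-e) (b-f) (c-g) (d-h)"
  by (rule eq_matI) (auto simp: mat2_def less_2_iff)

lemma mat2_smult [simp]: "k \<cdot>\<^sub>m mat2 a b c d = mat2 (k * a) (k * b) (k * c) (k * d)"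
  by (rule eq_matI) (auto simp: mat2_def less_2_iff)

lemma one_mat_2: "1\<^sub>m 2 = mat2 1 0 0 1"
  by (rule eq_matI) (auto simp: mat2_def less_2_iff)

lemma mat_diag_2: "mat_diag 2 f = mat2 (f 0) 0 0 (f 1)"
  by (rule eq_matI) (auto simp: mat2_def mat_diag_def less_2_iff)

lemma mat_adjoint_mat2 [simp]: "mat_adjoint (mat2 a b c d) = mat2 (cnj a) (cnj c) (cnj b) (cnj d)"
  by (rule eq_matI) (auto simp: mat2_def mat_adjoint_def less_2_iff mat_of_rows_def)

lemma mtrace_mat2 [simp]: "mtrace (mat2 a b c d) = a + d"
  by (simp add: mtrace_def sum_lessThan_2 mat2_def)

lemma pauli_mat2: "sigma1 = mat2 0 1 1 0" "sigma2 = mat2 0 (-\<i>) \<i> 0" "sigma3 = mat2 1 0 0 (-1)"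
  by (rule eq_matI; auto simp: mat2_def sigma1_def sigma2_def sigma3_def mat_of_rows_list_def less_2_iff)+

lemma mtrace_mult_comm_2:
  assumes "A \<in> carrier_mat 2 2" "B \<in> carrier_mat 2 2"
  shows "mtrace (A * B) = mtrace (B * A)"
  by (subst (1 2) mat2_eta[OF assms(1)], subst (1 2) mat2_eta[OF assms(2)]) (simp add: algebra_simps)

lemma mtrace_mult_add_scalar_2:
  assumes "A \<in> carrier_mat 2 2" "B \<in> carrier_mat 2 2"
  shows "mtrace (A * (B + k \<cdot>\<^sub>m 1\<^sub>m 2)) = mtrace (A * B) + k * mtrace A"
  by (subst (1 2 3) mat2_eta[OF assms(1)], subst (1 2) mat2_eta[OF assms(2)]) (simp add: one_mat_2 algebra_simps)

lemma mtrace_smult_mult_2: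
  assumes "A \<in> carrier_mat 2 2" "B \<in> carrier_mat 2 2"
  shows "mtrace ((k \<cdot>\<^sub>m A) * B) = k * mtrace (A * B)"
  by (subst (1 2) mat2_eta[OF assms(1)], subst (1 2) mat2_eta[OF assms(2)]) (simp add: algebra_simps)

definition vec2 :: "complex \<Rightarrow> complex \<Rightarrow> complex vec" where
  "vec2 u v = vec 2 (\<lambda>i. if i = 0 then u else v)"

lemma vec2_carrier [simp]: "vec2 u v \<in> carrier_vec 2"
  by (simp add: vec2_def)

lemma vec2_eta: "v \<in> carrier_vec 2 \<Longrightarrow> v = vec2 (v $ 0) (v $ 1)"
  by (rule eq_vecI) (auto simp: vec2_def less_2_iff)

lemma mat2_mult_vec2 [simp]: "mat2 a b c d *\<^sub>v vec2 u v = vec2 (a * u + b * v) (c * u + d * v)"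
  by (rule eq_vecI) (auto simp: vec2_def less_2_iff mat2_def scalar_prod_def sum_atLeast0LessThan_2 row_def)

lemma conjugate_vec2 [simp]: "conjugate (vec2 u v) = vec2 (cnj u) (cnj v)"
  by (rule eq_vecI) (auto simp: vec2_def less_2_iff)

lemma scalar_prod_vec2 [simp]: "vec2 a b \<bullet> vec2 c d = a * c + b * d"
  by (simp add: vec2_def scalar_prod_def sum_atLeast0LessThan_2)

lemma vec2_eq_zero_iff: "vec2 u v = 0\<^sub>v 2 \<longleftrightarrow> u = 0 \<and> v = 0"
proof
  assume "vec2 u v = 0\<^sub>v 2"
  hence "vec2 u v $ 0 = 0" "vec2 u v $ 1 = 0" by auto
  thus "u = 0 \<and> v = 0" by (auto simp: vec2_def)
qed (auto intro: eq_vecI simp: vec2_def less_2_iff)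

section \<open>Hermitian \<open>2 \<times> 2\<close> matrices in the Pauli basis\<close>

text \<open>\<open>pauli_mat a x y z = a\<one> + x\<sigma>\<^sub>1 + y\<sigma>\<^sub>2 + z\<sigma>\<^sub>3\<close>.\<close>
definition pauli_mat :: "real \<Rightarrow> real \<Rightarrow> real \<Rightarrow> real \<Rightarrow> complex mat" where
  "pauli_mat a x y z =
     mat2 (of_real (a+z)) (of_real x - \<i> * of_real y) (of_real x + \<i> * of_real y) (of_real (a-z))"

lemma pauli_mat_carrier [simp]: "pauli_mat a x y z \<in> carrier_mat 2 2"
  by (simp add: pauli_mat_def)

lemma hermitian_pauli_mat: "hermitian_mat 2 (pauli_mat a x y z)"
  unfolding hermitian_mat_def pauli_mat_def by simp

lemma mtrace_pauli_mat: "mtrace (pauli_mat a x y z) = of_real (2 * a)"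
  unfolding pauli_mat_def by simp

lemma pauli_mat_square:
  "pauli_mat a x y z * pauli_mat a x y z = pauli_mat (a\<^sup>2 + x\<^sup>2 + y\<^sup>2 + z\<^sup>2) (2 * a * x) (2 * a * y) (2 * a * z)"
  unfolding pauli_mat_def by (simp add: mat2_eq_iff complex_eq_iff power2_eq_square algebra_simps)

lemma smult_pauli_mat: "of_real c \<cdot>\<^sub>m pauli_mat a x y z = pauli_mat (c * a) (c * x) (c * y) (c * z)"
  unfolding pauli_mat_def by (simp add: mat2_eq_iff complex_eq_iff algebra_simps)

lemma hermitian_mat2E:
  assumes "hermitian_mat 2 A"
  obtains a x y z where "A = pauli_mat a x y z"
proof -
  have A: "A \<in> carrier_mat 2 2" and adj: "mat_adjoint A = A"
    using assms unfolding hermitian_mat_def by auto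
  have "mat_adjoint (mat2 (A $$ (0,0)) (A $$ (0,1)) (A $$ (1,0)) (A $$ (1,1)))
      = mat2 (A $$ (0,0)) (A $$ (0,1)) (A $$ (1,0)) (A $$ (1,1))"
    using adj mat2_eta[OF A] by simp
  hence "cnj (A $$ (0,0)) = A $$ (0,0)" "cnj (A $$ (1,0)) = A $$ (0,1)" "cnj (A $$ (1,1)) = A $$ (1,1)"
    unfolding mat_adjoint_mat2 mat2_eq_iff by auto
  hence "A = pauli_mat ((Re (A $$ (0,0)) + Re (A $$ (1,1))) / 2) (Re (A $$ (1,0))) (Im (A $$ (1,0)))
                       ((Re (A $$ (0,0)) - Re (A $$ (1,1))) / 2)"
    by (subst mat2_eta[OF A]) (auto simp: pauli_mat_def mat2_eq_iff complex_eq_iff field_simps)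
  thus thesis ..
qed

lemma quadratic_form_pauli_mat:
  "Re (conjugate (vec2 v0 v1) \<bullet> (pauli_mat a x y z *\<^sub>v vec2 v0 v1)) =
     (a+z) * ((Re v0)\<^sup>2 + (Im v0)\<^sup>2) + (a-z) * ((Re v1)\<^sup>2 + (Im v1)\<^sup>2)
     + 2 * ((Re v0 * x - Im v0 * y) * Re v1 + (Re v0 * y + Im v0 * x) * Im v1)"
  unfolding pauli_mat_def by (simp add: algebra_simps power2_eq_square)

lemma posdef_pauli_mat:
  assumes "a > 0" "x\<^sup>2 + y\<^sup>2 + z\<^sup>2 < a\<^sup>2"
  shows "posdef_mat 2 (pauli_mat a x y z)"
  unfolding posdef_mat_def
proof (intro conjI hermitian_pauli_mat ballI impI)
  fix v :: "complex vec"
  assume v: "v \<in> carrier_vec 2" "v \<noteq> 0\<^sub>v 2"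
  define p q u w where "p = Re (v $ 0)" "q = Im (v $ 0)" "u = Re (v $ 1)" "w = Im (v $ 1)"
  have "v $ 0 \<noteq> 0 \<or> v $ 1 \<noteq> 0"
    using v vec2_eta[OF v(1)] vec2_eq_zero_iff by metis
  hence nonzero: "p \<noteq> 0 \<or> q \<noteq> 0 \<or> u \<noteq> 0 \<or> w \<noteq> 0"
    unfolding p_q_u_w_def by (auto simp: complex_eq_iff)
  define Q where "Q = (a+z) * (p\<^sup>2 + q\<^sup>2) + (a-z) * (u\<^sup>2 + w\<^sup>2) + 2 * ((p * x - q * y) * u + (p * y + q * x) * w)"
  have "z\<^sup>2 < a\<^sup>2"
    using assms(2) zero_le_power2[of x] zero_le_power2[of y] by linarith
  hence "\<bar>z\<bar> < a"
    using power2_less_imp_less[of "\<bar>z\<bar>" a] assms(1) by simp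
  hence az: "a + z > 0" by simp
  have det: "(a+z) * (a-z) - x\<^sup>2 - y\<^sup>2 > 0"
    using assms(2) by (simp add: algebra_simps power2_eq_square)
  \<comment> \<open>completing the square in the first coordinate\<close>
  have completed: "(a+z) * Q = ((a+z) * p + x * u + y * w)\<^sup>2 + ((a+z) * q + x * w - y * u)\<^sup>2
                     + ((a+z) * (a-z) - x\<^sup>2 - y\<^sup>2) * (u\<^sup>2 + w\<^sup>2)"
    unfolding Q_def by (simp add: algebra_simps power2_eq_square)
  have "(a+z) * Q > 0"
  proof (cases "u = 0 \<and> w = 0")
    case True
    with nonzero az have "((a+z) * p)\<^sup>2 + ((a+z) * q)\<^sup>2 > 0"
      by (auto simp: sum_power2_gt_zero_iff)
    thus ?thesis unfolding completed using True by simp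
  next
    case False
    hence "u\<^sup>2 + w\<^sup>2 > 0" by (auto simp: sum_power2_gt_zero_iff)
    with det have "((a+z) * (a-z) - x\<^sup>2 - y\<^sup>2) * (u\<^sup>2 + w\<^sup>2) > 0" by simp
    thus ?thesis unfolding completed
      using zero_le_power2[of "(a+z) * p + x * u + y * w"] zero_le_power2[of "(a+z) * q + x * w - y * u"]
      by linarith
  qed
  hence "Q > 0"
    using az by (simp add: zero_less_mult_iff)
  thus "0 < Re (conjugate v \<bullet> (pauli_mat a x y z *\<^sub>v v))"
    by (subst (1 2) vec2_eta[OF v(1)]) (simp only: quadratic_form_pauli_mat Q_def p_q_u_w_def)
qed

lemma posdef_mat2E:
  assumes "posdef_mat 2 X"
  obtains a x y z where "X = pauli_mat a x y z" "a > 0" "x\<^sup>2 + y\<^sup>2 + z\<^sup>2 < a\<^sup>2"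
proof -
  have pos: "\<And>v. v \<in> carrier_vec 2 \<Longrightarrow> v \<noteq> 0\<^sub>v 2 \<Longrightarrow> Re (conjugate v \<bullet> (X *\<^sub>v v)) > 0"
    using assms unfolding posdef_mat_def by auto
  obtain a x y z where X: "X = pauli_mat a x y z"
    using assms hermitian_mat2E unfolding posdef_mat_def by blast
  have "Re (conjugate (vec2 1 0) \<bullet> (X *\<^sub>v vec2 1 0)) > 0"
    by (rule pos) (auto simp: vec2_eq_zero_iff)
  hence "a + z > 0" unfolding X quadratic_form_pauli_mat by simp
  moreover have "Re (conjugate (vec2 0 1) \<bullet> (X *\<^sub>v vec2 0 1)) > 0"
    by (rule pos) (auto simp: vec2_eq_zero_iff)
  hence az: "a - z > 0" unfolding X quadratic_form_pauli_mat by simp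
  moreover
  \<comment> \<open>the test vector orthogonal to the second row of \<open>X\<close> isolates the determinant\<close>
  have "Re (conjugate (vec2 (of_real (a-z)) (- (of_real x + \<i> * of_real y)))
           \<bullet> (X *\<^sub>v vec2 (of_real (a-z)) (- (of_real x + \<i> * of_real y)))) > 0"
    by (rule pos) (use az in \<open>auto simp: vec2_eq_zero_iff\<close>)
  hence "(a-z) * ((a+z) * (a-z) - x\<^sup>2 - y\<^sup>2) > 0"
    unfolding X quadratic_form_pauli_mat by (simp add: algebra_simps power2_eq_square)
  hence "(a+z) * (a-z) - x\<^sup>2 - y\<^sup>2 > 0"
    using az by (simp add: zero_less_mult_iff)
  hence "x\<^sup>2 + y\<^sup>2 + z\<^sup>2 < a\<^sup>2"
    by (simp add: algebra_simps power2_eq_square)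
  ultimately show thesis
    using X that by simp
qed

section \<open>Unitary diagonalization and the functional calculus\<close>

lemma unitary_mat2_rotation:
  assumes "c\<^sup>2 + (cmod s)\<^sup>2 = 1"
  shows "unitary_mat 2 (mat2 (of_real c) (- cnj s) s (of_real c))"
proof -
  have "cnj s * s = of_real ((cmod s)\<^sup>2)"
    by (metis complex_norm_square mult.commute of_real_power)
  hence "of_real c * of_real c + cnj s * s = (1::complex)"
    using assms by (simp add: power2_eq_square flip: of_real_mult of_real_add)
  thus ?thesis
    unfolding unitary_mat_def by (simp add: one_mat_2 mat2_eq_iff algebra_simps)
qed

lemma mat2_rotation_conj_diag:
  "mat2 (of_real c) (- cnj s) s (of_real c) * mat_diag 2 (\<lambda>i. complex_of_real (d i))
     * mat_adjoint (mat2 (of_real c) (- cnj s) s (of_real c))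
   = mat2 (of_real (c\<^sup>2 * d 0 + (cmod s)\<^sup>2 * d 1)) (of_real (c * (d 0 - d 1)) * cnj s)
              (of_real (c * (d 0 - d 1)) * s) (of_real ((cmod s)\<^sup>2 * d 0 + c\<^sup>2 * d 1))"
proof -
  have "cnj s * s = of_real ((cmod s)\<^sup>2)"
    by (metis complex_norm_square mult.commute of_real_power)
  thus ?thesis
    unfolding mat_diag_2 by (simp add: mat2_eq_iff algebra_simps power2_eq_square)
qed

lemma pauli_mat_eq_rotation_conj_diag:
  fixes m x y h :: real
  defines "\<beta> \<equiv> complex_of_real x + \<i> * complex_of_real y"
  assumes "\<beta> \<noteq> 0"
  obtains c s d where "c\<^sup>2 + (cmod s)\<^sup>2 = 1"
    "pauli_mat m x y h = mat2 (of_real c) (- cnj s) s (of_real c) * mat_diag 2 (\<lambda>i. complex_of_real (d i))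
                         * mat_adjoint (mat2 (of_real c) (- cnj s) s (of_real c))"
proof -
  \<comment> \<open>eigenvalues \<open>m \<plusminus> w\<close>; rotation with \<open>c\<^sup>2 = (w+h)/(2w)\<close> and \<open>s c (2w) = \<beta>\<close>\<close>
  define w where "w = sqrt (h\<^sup>2 + (cmod \<beta>)\<^sup>2)"
  define c where "c = sqrt ((w + h) / (2 * w))"
  define s where "s = \<beta> / of_real (2 * w * c)"
  define d where "d = (\<lambda>i::nat. if i = 0 then m + w else m - w)"
  have \<beta>: "(cmod \<beta>)\<^sup>2 > 0" using assms by simp
  have w2: "w\<^sup>2 = h\<^sup>2 + (cmod \<beta>)\<^sup>2" and "w > 0"
    unfolding w_def using \<beta> by (simp_all add: add_nonneg_pos)
  hence "\<bar>h\<bar> < w"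
    using power2_less_imp_less[of "\<bar>h\<bar>" w] \<beta> by simp
  hence wh: "w + h > 0" "w - h > 0" by auto
  have c2: "c\<^sup>2 = (w + h) / (2 * w)" and "c > 0"
    unfolding c_def using wh \<open>w > 0\<close> by simp_all
  have "cmod s = cmod \<beta> / (2 * w * c)"
    unfolding s_def using \<open>c > 0\<close> \<open>w > 0\<close> by (simp add: norm_divide norm_mult)
  hence "(cmod s)\<^sup>2 = (w\<^sup>2 - h\<^sup>2) / (4 * w\<^sup>2 * c\<^sup>2)"
    using w2 by (simp add: power_divide power_mult_distrib)
  also have "4 * w\<^sup>2 * c\<^sup>2 = (2 * w) * (c\<^sup>2 * (2 * w))"
    by (simp add: power2_eq_square algebra_simps)
  also have "c\<^sup>2 * (2 * w) = w + h"
    unfolding c2 using \<open>w > 0\<close> by simp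
  also have "w\<^sup>2 - h\<^sup>2 = (w - h) * (w + h)"
    by (simp add: power2_eq_square algebra_simps)
  also have "(w - h) * (w + h) / (2 * w * (w + h)) = (w - h) / (2 * w)"
    using wh by simp
  finally have s2: "(cmod s)\<^sup>2 = (w - h) / (2 * w)" .
  have "c\<^sup>2 + (cmod s)\<^sup>2 = 1"
    unfolding c2 s2 using \<open>w > 0\<close> by (simp add: field_simps)
  moreover have "pauli_mat m x y h = mat2 (of_real c) (- cnj s) s (of_real c)
      * mat_diag 2 (\<lambda>i. complex_of_real (d i)) * mat_adjoint (mat2 (of_real c) (- cnj s) s (of_real c))"
  proof -
    have "c\<^sup>2 * d 0 + (cmod s)\<^sup>2 * d 1 = m + h" "(cmod s)\<^sup>2 * d 0 + c\<^sup>2 * d 1 = m - h"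
      unfolding c2 s2 d_def using \<open>w > 0\<close> by (simp_all add: field_simps)
    moreover have off: "of_real (c * (d 0 - d 1)) * s = of_real x + \<i> * of_real y"
      unfolding s_def d_def \<beta>_def[symmetric] using \<open>c > 0\<close> \<open>w > 0\<close> by (simp add: field_simps)
    moreover have "of_real (c * (d 0 - d 1)) * cnj s = of_real x - \<i> * of_real y"
      using arg_cong[OF off, of cnj] by simp
    ultimately show ?thesis
      unfolding mat2_rotation_conj_diag pauli_mat_def by simp
  qed
  ultimately show thesis by (rule that)
qed

lemma hermitian_mat2_diagonalizable:
  assumes "hermitian_mat 2 A"
  shows "\<exists>U d. unitary_mat 2 U \<and> A = U * mat_diag 2 (\<lambda>i. complex_of_real (d i)) * mat_adjoint U"
proof -
  obtain m x y h where A: "A = pauli_mat m x y h"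
    using hermitian_mat2E[OF assms] .
  show ?thesis
  proof (cases "complex_of_real x + \<i> * complex_of_real y = 0")
    case True
    define d where "d = (\<lambda>i::nat. if i = 0 then m + h else m - h)"
    from True have "A = mat2 1 0 0 1 * mat_diag 2 (\<lambda>i. complex_of_real (d i)) * mat_adjoint (mat2 1 0 0 1)"
      unfolding A pauli_mat_def d_def by (simp add: mat_diag_2 complex_eq_iff)
    moreover have "unitary_mat 2 (mat2 1 0 0 1)"
      unfolding unitary_mat_def by (simp add: one_mat_2)
    ultimately show ?thesis by blast
  next
    case False
    then obtain c s d where "c\<^sup>2 + (cmod s)\<^sup>2 = 1"
      "A = mat2 (of_real c) (- cnj s) s (of_real c) * mat_diag 2 (\<lambda>i. complex_of_real (d i))
           * mat_adjoint (mat2 (of_real c) (- cnj s) s (of_real c))"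
      unfolding A by (rule pauli_mat_eq_rotation_conj_diag)
    thus ?thesis using unitary_mat2_rotation by blast
  qed
qed

lemma unitary_conj_mult:
  assumes U: "unitary_mat n U" and D: "D \<in> carrier_mat n n" and F: "F \<in> carrier_mat n n"
  shows "(U * D * mat_adjoint U) * (U * F * mat_adjoint U) = U * (D * F) * mat_adjoint U"
proof -
  have Uc: "U \<in> carrier_mat n n" and VU: "mat_adjoint U * U = 1\<^sub>m n"
    using U unfolding unitary_mat_def by auto
  have Vc: "mat_adjoint U \<in> carrier_mat n n"
    using Uc by (auto simp: mat_adjoint_def mat_of_rows_def)
  have "(U * D * mat_adjoint U) * (U * F * mat_adjoint U)
      = U * D * (mat_adjoint U * U) * F * mat_adjoint U"
    using Uc Vc D F by (simp add: assoc_mult_mat[of _ n n _ n _ n])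
  also have "\<dots> = U * (D * F) * mat_adjoint U"
    using Uc Vc D F by (simp add: VU assoc_mult_mat[of _ n n _ n _ n])
  finally show ?thesis .
qed

lemma mtrace_unitary_conj_2:
  assumes U: "unitary_mat 2 U" and M: "M \<in> carrier_mat 2 2"
  shows "mtrace (U * M * mat_adjoint U) = mtrace M"
proof -
  have Uc: "U \<in> carrier_mat 2 2" and VU: "mat_adjoint U * U = 1\<^sub>m 2"
    using U unfolding unitary_mat_def by auto
  have Vc: "mat_adjoint U \<in> carrier_mat 2 2"
    using Uc by (auto simp: mat_adjoint_def mat_of_rows_def)
  have "mtrace (U * M * mat_adjoint U) = mtrace (mat_adjoint U * (U * M))"
    using Uc Vc M by (intro mtrace_mult_comm_2) auto
  also have "\<dots> = mtrace M"
    using Uc Vc M by (simp add: VU flip: assoc_mult_mat[of _ 2 2 _ 2 _ 2])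
  finally show ?thesis .
qed

lemma herm_fun_spectral:
  assumes "\<exists>U d. unitary_mat n U \<and> A = U * mat_diag n (\<lambda>i. complex_of_real (d i)) * mat_adjoint U"
  obtains U d where "unitary_mat n U"
    "A = U * mat_diag n (\<lambda>i. complex_of_real (d i)) * mat_adjoint U"
    "herm_fun n f A = U * mat_diag n (\<lambda>i. complex_of_real (f (d i))) * mat_adjoint U"
proof -
  let ?P = "\<lambda>B. \<exists>U d. unitary_mat n U \<and> A = U * mat_diag n (\<lambda>i. complex_of_real (d i)) * mat_adjoint U
                  \<and> B = U * mat_diag n (\<lambda>i. complex_of_real (f (d i))) * mat_adjoint U"
  from assms obtain U d where "unitary_mat n U"
    "A = U * mat_diag n (\<lambda>i. complex_of_real (d i)) * mat_adjoint U" by blast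
  hence "?P (U * mat_diag n (\<lambda>i. complex_of_real (f (d i))) * mat_adjoint U)" by blast
  hence "?P (herm_fun n f A)"
    unfolding herm_fun_def by (rule someI)
  with that show thesis by blast
qed

text \<open>Trace and trace of the square determine an unordered pair of reals.\<close>
lemma pauli_mat_spectrum:
  fixes b u v w :: real
  assumes U: "unitary_mat 2 U"
    and P: "pauli_mat b u v w = U * mat_diag 2 (\<lambda>i. complex_of_real (d i)) * mat_adjoint U"
  defines "\<rho> \<equiv> sqrt (u\<^sup>2 + v\<^sup>2 + w\<^sup>2)"
  shows "(d 0 = b + \<rho> \<and> d 1 = b - \<rho>) \<or> (d 0 = b - \<rho> \<and> d 1 = b + \<rho>)"
proof -
  define D where "D = mat_diag 2 (\<lambda>i. complex_of_real (d i))"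
  have D: "D \<in> carrier_mat 2 2" unfolding D_def by simp
  have "mtrace (pauli_mat b u v w) = mtrace D"
    unfolding P D_def by (rule mtrace_unitary_conj_2[OF U D[unfolded D_def]])
  hence sum: "d 0 + d 1 = 2 * b"
    unfolding D_def mat_diag_2 mtrace_pauli_mat by (simp add: complex_eq_iff)
  have "mtrace (pauli_mat b u v w * pauli_mat b u v w) = mtrace (D * D)"
    using mtrace_unitary_conj_2[OF U] unitary_conj_mult[OF U D D] P D unfolding D_def by simp
  hence squares: "(d 0)\<^sup>2 + (d 1)\<^sup>2 = 2 * (b\<^sup>2 + \<rho>\<^sup>2)"
    unfolding pauli_mat_square mtrace_pauli_mat D_def mat_diag_2 \<rho>_def
    by (simp add: power2_eq_square flip: of_real_mult of_real_add)
  have d1: "d 1 = 2 * b - d 0"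
    using sum by simp
  have "(d 0 - (b + \<rho>)) * (d 0 - (b - \<rho>)) = ((d 0)\<^sup>2 + (d 1)\<^sup>2 - 2 * (b\<^sup>2 + \<rho>\<^sup>2)) / 2"
    unfolding d1 by (simp add: field_simps power2_eq_square)
  also have "\<dots> = 0"
    using squares by simp
  finally show ?thesis using d1 by auto
qed

lemma herm_fun_pauli_mat:
  fixes b u v w :: real
  defines "P \<equiv> pauli_mat b u v w" and "\<rho> \<equiv> sqrt (u\<^sup>2 + v\<^sup>2 + w\<^sup>2)"
  shows "herm_fun 2 f P \<in> carrier_mat 2 2"
    and "mtrace (P * herm_fun 2 f P) = of_real ((b + \<rho>) * f (b + \<rho>) + (b - \<rho>) * f (b - \<rho>))"
proof -
  obtain U d where U: "unitary_mat 2 U"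
    and P: "P = U * mat_diag 2 (\<lambda>i. complex_of_real (d i)) * mat_adjoint U"
    and F: "herm_fun 2 f P = U * mat_diag 2 (\<lambda>i. complex_of_real (f (d i))) * mat_adjoint U"
    using herm_fun_spectral hermitian_mat2_diagonalizable[OF hermitian_pauli_mat] unfolding P_def
    by metis
  have Uc: "U \<in> carrier_mat 2 2" using U unfolding unitary_mat_def by auto
  show "herm_fun 2 f P \<in> carrier_mat 2 2"
    unfolding F using Uc by (auto simp: mat_adjoint_def mat_of_rows_def)
  have "mtrace (P * herm_fun 2 f P) = of_real (d 0 * f (d 0) + d 1 * f (d 1))"
    unfolding F unfolding P unitary_conj_mult[OF U mat_diag_dim mat_diag_dim]
    by (simp add: mtrace_unitary_conj_2[OF U] mat_diag_2)
  also have "\<dots> = of_real ((b + \<rho>) * f (b + \<rho>) + (b - \<rho>) * f (b - \<rho>))"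
    using pauli_mat_spectrum[OF U P[unfolded P_def]] unfolding \<rho>_def by auto
  finally show "mtrace (P * herm_fun 2 f P) = \<dots>" .
qed

section \<open>The 2-entropy of a positive definite matrix\<close>

definition ent_profile :: "real \<Rightarrow> real" where
  "ent_profile t = ((1+t)\<^sup>2 * ln (1+t) + (1-t)\<^sup>2 * ln (1-t)) / 2 - (1 + t\<^sup>2) * ln (1 + t\<^sup>2) / 2"

text \<open>\<open>q\<close> and \<open>1 - q\<close> are the eigenvalues of \<open>X\<^sup>2 / tr X\<^sup>2\<close> for \<open>X = \<one> + t\<sigma>\<close> with \<open>|\<sigma>| = 1\<close>.\<close>
lemma ent_profile_eq_rel_entropy:
  assumes "0 \<le> t" "t < 1"
  defines "q \<equiv> (1+t)\<^sup>2 / (2 * (1 + t\<^sup>2))"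
  shows "1 - q = (1-t)\<^sup>2 / (2 * (1 + t\<^sup>2))"
    and "ent_profile t = (1 + t\<^sup>2) / 2 * (q * ln (2 * q) + (1-q) * ln (2 * (1-q)))"
proof -
  have pos: "1 + t\<^sup>2 > 0" by (simp add: add_pos_nonneg)
  show q': "1 - q = (1-t)\<^sup>2 / (2 * (1 + t\<^sup>2))"
    unfolding q_def using pos by (simp add: field_simps power2_eq_square)
  have "2 * q = (1+t)\<^sup>2 / (1 + t\<^sup>2)" "2 * (1-q) = (1-t)\<^sup>2 / (1 + t\<^sup>2)"
    unfolding q' unfolding q_def using pos by (simp_all add: divide_simps)
  hence ln2q: "ln (2 * q) = 2 * ln (1+t) - ln (1 + t\<^sup>2)" "ln (2 * (1-q)) = 2 * ln (1-t) - ln (1 + t\<^sup>2)"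
    using assms(1,2) pos by (simp_all add: ln_div ln_realpow)
  have weights: "(1 + t\<^sup>2) / 2 * q = (1+t)\<^sup>2 / 4" "(1 + t\<^sup>2) / 2 * (1-q) = (1-t)\<^sup>2 / 4"
    unfolding q' unfolding q_def using pos by (simp_all add: field_simps)
  have "(1 + t\<^sup>2) / 2 * (q * ln (2 * q) + (1-q) * ln (2 * (1-q)))
      = (1 + t\<^sup>2) / 2 * q * ln (2 * q) + (1 + t\<^sup>2) / 2 * (1-q) * ln (2 * (1-q))"
    by (simp only: distrib_left mult.assoc)
  also have "\<dots> = (1+t)\<^sup>2 / 4 * (2 * ln (1+t) - ln (1 + t\<^sup>2)) + (1-t)\<^sup>2 / 4 * (2 * ln (1-t) - ln (1 + t\<^sup>2))"
    unfolding weights ln2q ..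
  also have "\<dots> = ent_profile t"
    unfolding ent_profile_def by (simp add: field_simps power2_eq_square)
  finally show "ent_profile t = (1 + t\<^sup>2) / 2 * (q * ln (2 * q) + (1-q) * ln (2 * (1-q)))"
    by (rule sym)
qed

lemma ent2_pauli_mat_spectral:
  fixes a x y z :: real
  assumes "a > 0"
  defines "r \<equiv> sqrt (x\<^sup>2 + y\<^sup>2 + z\<^sup>2)"
  defines "s \<equiv> a\<^sup>2 + r\<^sup>2"
  defines "\<mu> \<equiv> a * r / s"
  shows "ent2 (pauli_mat a x y z) = s / 2 * ((1/2 + \<mu>) * ln (1/2 + \<mu>) + (1/2 - \<mu>) * ln (1/2 - \<mu>) + ln 2)"
proof -
  define X where "X = pauli_mat a x y z"
  define \<rho> where "\<rho> = (1 / mtrace (X * X)) \<cdot>\<^sub>m (X * X)"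
  have r2: "r\<^sup>2 = x\<^sup>2 + y\<^sup>2 + z\<^sup>2" unfolding r_def by simp
  have "s > 0" unfolding s_def using assms(1) by (simp add: add_pos_nonneg)
  have XX: "X * X = pauli_mat s (2 * a * x) (2 * a * y) (2 * a * z)"
    unfolding X_def pauli_mat_square s_def r2 by (simp add: add.assoc)
  hence trXX: "mtrace (X * X) = of_real (2 * s)" by (simp add: mtrace_pauli_mat)
  have inv_trXX: "1 / mtrace (X * X) = of_real (1 / (2 * s))"
    unfolding trXX by simp
  have \<rho>: "\<rho> = pauli_mat (1/2) (a * x / s) (a * y / s) (a * z / s)"
    unfolding \<rho>_def inv_trXX unfolding XX smult_pauli_mat using \<open>s > 0\<close> by simp
  have XX\<rho>: "X * X = of_real (2 * s) \<cdot>\<^sub>m \<rho>"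
    unfolding \<rho> XX smult_pauli_mat using \<open>s > 0\<close> by (simp add: mult.assoc)
  \<comment> \<open>\<open>\<rho>\<close> has Bloch radius \<open>\<mu>\<close>, hence eigenvalues \<open>1/2 \<plusminus> \<mu>\<close>\<close>
  have "(a * x / s)\<^sup>2 + (a * y / s)\<^sup>2 + (a * z / s)\<^sup>2 = (a / s)\<^sup>2 * r\<^sup>2"
    unfolding r2 by (simp add: power_mult_distrib power_divide distrib_left)
  hence radius: "sqrt ((a * x / s)\<^sup>2 + (a * y / s)\<^sup>2 + (a * z / s)\<^sup>2) = \<mu>"
    unfolding \<mu>_def r_def using assms(1) \<open>s > 0\<close> by (simp add: real_sqrt_mult)
  have tr\<rho>log: "mtrace (\<rho> * mat_log 2 \<rho>) = of_real ((1/2 + \<mu>) * ln (1/2 + \<mu>) + (1/2 - \<mu>) * ln (1/2 - \<mu>))"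
    unfolding mat_log_def \<rho> herm_fun_pauli_mat(2) radius ..
  have \<rho>c: "\<rho> \<in> carrier_mat 2 2" and logc: "mat_log 2 \<rho> \<in> carrier_mat 2 2"
    unfolding \<rho> mat_log_def by (simp_all add: herm_fun_pauli_mat(1))
  have "mtrace (X * X * (mat_log 2 \<rho> + of_real (ln 2) \<cdot>\<^sub>m 1\<^sub>m 2))
      = mtrace (X * X * mat_log 2 \<rho>) + of_real (ln 2) * mtrace (X * X)"
    by (rule mtrace_mult_add_scalar_2) (simp_all add: XX logc)
  also have "mtrace (X * X * mat_log 2 \<rho>) = of_real (2 * s) * mtrace (\<rho> * mat_log 2 \<rho>)"
    unfolding XX\<rho> by (rule mtrace_smult_mult_2[OF \<rho>c logc])
  finally have T: "mtrace (X * X * (mat_log 2 \<rho> + of_real (ln 2) \<cdot>\<^sub>m 1\<^sub>m 2))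
      = of_real (2 * s * ((1/2 + \<mu>) * ln (1/2 + \<mu>) + (1/2 - \<mu>) * ln (1/2 - \<mu>)) + ln 2 * (2 * s))"
    unfolding tr\<rho>log trXX by simp
  show ?thesis
    unfolding ent2_def X_def[symmetric] \<rho>_def[symmetric] T Re_complex_of_real by (simp add: algebra_simps)
qed

lemma ent2_pauli_mat:
  assumes "a > 0" "x\<^sup>2 + y\<^sup>2 + z\<^sup>2 < a\<^sup>2"
  shows "ent2 (pauli_mat a x y z) = a\<^sup>2 * ent_profile (sqrt (x\<^sup>2 + y\<^sup>2 + z\<^sup>2) / a)"
proof -
  define r where "r = sqrt (x\<^sup>2 + y\<^sup>2 + z\<^sup>2)"
  define t where "t = r / a"
  define q where "q = (1+t)\<^sup>2 / (2 * (1 + t\<^sup>2))"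
  have "0 \<le> r" "r < a"
    using assms unfolding r_def by (auto intro: real_less_lsqrt)
  hence t: "0 \<le> t" "t < 1" unfolding t_def using assms(1) by auto
  have pos: "1 + t\<^sup>2 > 0" by (simp add: add_pos_nonneg)
  have r: "r = a * t" unfolding t_def using assms(1) by simp
  have s: "a\<^sup>2 + r\<^sup>2 = a\<^sup>2 * (1 + t\<^sup>2)" unfolding r by (simp add: algebra_simps power2_eq_square)
  have \<mu>: "a * r / (a\<^sup>2 * (1 + t\<^sup>2)) = t / (1 + t\<^sup>2)"
    unfolding r using assms(1) by (simp add: power2_eq_square)
  have eigenvalues: "1/2 + t / (1 + t\<^sup>2) = q" "1/2 - t / (1 + t\<^sup>2) = 1 - q"
    unfolding ent_profile_eq_rel_entropy(1)[OF t, folded q_def] unfolding q_def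
    using pos by (simp_all add: field_simps power2_eq_square)
  have "ent2 (pauli_mat a x y z) = a\<^sup>2 * (1 + t\<^sup>2) / 2 * (q * ln q + (1-q) * ln (1-q) + ln 2)"
    using ent2_pauli_mat_spectral[OF assms(1), of x y z]
    unfolding r_def[symmetric] unfolding s unfolding \<mu> eigenvalues .
  also have "\<dots> = a\<^sup>2 * ((1 + t\<^sup>2) / 2 * (q * ln (2 * q) + (1-q) * ln (2 * (1-q))))"
  proof -
    have "0 < q" "0 < 1 - q"
      unfolding ent_profile_eq_rel_entropy(1)[OF t, folded q_def] unfolding q_def
      using t by (simp_all add: add_pos_nonneg)
    hence ln2q: "ln (2 * q) = ln 2 + ln q" "ln (2 * (1-q)) = ln 2 + ln (1-q)"
      using ln_mult[of 2 q] ln_mult[of 2 "1-q"] by simp_all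
    show ?thesis unfolding ln2q by (simp add: field_simps)
  qed
  also have "\<dots> = a\<^sup>2 * ent_profile t"
    unfolding ent_profile_eq_rel_entropy(2)[OF t, folded q_def] ..
  finally show ?thesis unfolding t_def r_def .
qed

lemma ent_profile_nonneg:
  assumes "0 \<le> t" "t < 1"
  shows "ent_profile t \<ge> 0"
proof -
  define q where "q = (1+t)\<^sup>2 / (2 * (1 + t\<^sup>2))"
  \<comment> \<open>Gibbs' inequality against the uniform distribution, from \<open>ln u \<le> u - 1\<close> at \<open>u = 1/(2p)\<close>\<close>
  have gibbs: "p * ln (2 * p) \<ge> p - 1/2" if "p > 0" for p :: real
  proof -
    have "ln (1/(2 * p)) \<le> 1/(2 * p) - 1" using that by (intro ln_le_minus_one) simp
    hence "p * (- ln (2 * p)) \<le> p * (1/(2 * p) - 1)"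
      using that by (intro mult_left_mono) (simp_all add: ln_div)
    thus ?thesis using that by (simp add: algebra_simps)
  qed
  have "0 < q" "0 < 1 - q"
    using assms ent_profile_eq_rel_entropy(1)[OF assms] unfolding q_def by (simp_all add: add_pos_nonneg)
  hence "0 \<le> q * ln (2 * q) + (1-q) * ln (2 * (1-q))"
    using gibbs[of q] gibbs[of "1-q"] by linarith
  thus ?thesis
    unfolding ent_profile_eq_rel_entropy(2)[OF assms, folded q_def] by simp
qed

lemma ent_profile_gap_deriv2_nonneg:
  fixes x :: real
  assumes "0 \<le> x" "x < 1"
  shows "0 \<le> ln (1 + x\<^sup>2) - ln (1 + x) - ln (1 - x) + 2 * x\<^sup>2 / (1 + x\<^sup>2)"
proof -
  have "x * x \<le> x * 1"
    by (intro mult_left_mono) (use assms in auto)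
  hence "(1+x) * (1-x) \<le> 1" "0 < (1+x) * (1-x)"
    using assms by (auto simp: algebra_simps)
  have "ln (1 + x) + ln (1 - x) = ln ((1+x) * (1-x))"
    using assms by (simp add: ln_mult)
  also have "\<dots> \<le> 0"
    using \<open>(1+x) * (1-x) \<le> 1\<close> \<open>0 < (1+x) * (1-x)\<close> by simp
  finally have "ln (1 + x) + ln (1 - x) \<le> 0" .
  moreover have "0 \<le> ln (1 + x\<^sup>2)" "0 \<le> 2 * x\<^sup>2 / (1 + x\<^sup>2)"
    by simp_all
  ultimately show ?thesis by linarith
qed

lemma ent_profile_gap_deriv_nonneg:
  fixes x :: real
  assumes "0 \<le> x" "x < 1"
  shows "0 \<le> 2 * x - (1+x) * ln (1+x) + (1-x) * ln (1-x) + x * ln (1 + x\<^sup>2)"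
proof -
  define g where "g x = 2 * x - (1+x) * ln (1+x) + (1-x) * ln (1-x) + x * ln (1 + x\<^sup>2)" for x :: real
  have "(g has_real_derivative (ln (1 + y\<^sup>2) - ln (1 + y) - ln (1 - y) + 2 * y\<^sup>2 / (1 + y\<^sup>2))) (at y)"
    if "0 \<le> y" "y < 1" for y
  proof -
    have "0 < 1 + y\<^sup>2" "0 < 1 + y" "0 < 1 - y" using that by (auto simp: add_pos_nonneg)
    thus ?thesis unfolding g_def
      by (auto intro!: derivative_eq_intros) (simp add: divide_simps power2_eq_square)
  qed
  hence "g 0 \<le> g x"
    using assms ent_profile_gap_deriv2_nonneg by (intro DERIV_nonneg_imp_nondecreasing[OF assms(1)]) force
  thus ?thesis by (simp add: g_def)
qed

lemma ent_profile_le_square: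
  assumes "0 \<le> t" "t < 1"
  shows "ent_profile t \<le> t\<^sup>2"
proof -
  define g where "g t = t\<^sup>2 - ent_profile t" for t
  have "(g has_real_derivative (2 * y - (1+y) * ln (1+y) + (1-y) * ln (1-y) + y * ln (1 + y\<^sup>2))) (at y)"
    if "0 \<le> y" "y < 1" for y
  proof -
    have "0 < 1 + y\<^sup>2" "0 < 1 + y" "0 < 1 - y" using that by (auto simp: add_pos_nonneg)
    thus ?thesis unfolding g_def ent_profile_def
      by (auto intro!: derivative_eq_intros) (simp add: divide_simps; simp add: algebra_simps power2_eq_square)
  qed
  hence "g 0 \<le> g t"
    using assms ent_profile_gap_deriv_nonneg by (intro DERIV_nonneg_imp_nondecreasing[OF assms(1)]) force
  thus ?thesis by (simp add: g_def ent_profile_def)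
qed

lemma ent_profile_asymp: "((\<lambda>t. t\<^sup>2 / ent_profile t) \<longlongrightarrow> 1) (at_right 0)"
  unfolding ent_profile_def by real_asymp

definition pauli_form :: "real \<Rightarrow> real \<Rightarrow> real \<Rightarrow> real \<Rightarrow> real \<Rightarrow> real \<Rightarrow> real" where
  "pauli_form p1 p2 p3 x y z = (p2 + p3) * x\<^sup>2 + (p1 + p3) * y\<^sup>2 + (p1 + p2) * z\<^sup>2"

lemma dirichlet2_pauli_generator:
  "dirichlet2 (pauli_generator p1 p2 p3) (pauli_mat a x y z) = 2 * pauli_form p1 p2 p3 x y z"
  unfolding dirichlet2_def pauli_generator_def pauli_channel_def pauli_mat2 pauli_mat_def pauli_form_def
  by (simp add: algebra_simps power2_eq_square)

lemma pauli_form_ge: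
  "min (p1 + p2) (min (p2 + p3) (p3 + p1)) * (x\<^sup>2 + y\<^sup>2 + z\<^sup>2) \<le> pauli_form p1 p2 p3 x y z"
proof -
  let ?m = "min (p1 + p2) (min (p2 + p3) (p3 + p1))"
  have "?m * x\<^sup>2 \<le> (p2 + p3) * x\<^sup>2" "?m * y\<^sup>2 \<le> (p1 + p3) * y\<^sup>2" "?m * z\<^sup>2 \<le> (p1 + p2) * z\<^sup>2"
    by (intro mult_right_mono; simp)+
  thus ?thesis unfolding pauli_form_def by (simp add: algebra_simps)
qed

lemma pauli_ratio_ge:
  assumes "p1 \<ge> 0" "p2 \<ge> 0" "p3 \<ge> 0" and X: "posdef_mat 2 X" "ent2 X \<noteq> 0"
  shows "2 * min (p1 + p2) (min (p2 + p3) (p3 + p1))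
           \<le> dirichlet2 (pauli_generator p1 p2 p3) X / ent2 X"
proof -
  let ?m = "min (p1 + p2) (min (p2 + p3) (p3 + p1))"
  obtain a x y z where X': "X = pauli_mat a x y z" "a > 0" "x\<^sup>2 + y\<^sup>2 + z\<^sup>2 < a\<^sup>2"
    using posdef_mat2E[OF X(1)] .
  define t where "t = sqrt (x\<^sup>2 + y\<^sup>2 + z\<^sup>2) / a"
  have "0 \<le> t" "t < 1"
    unfolding t_def using X'(2,3) by (auto intro: real_sqrt_less_iff[THEN iffD2] real_less_lsqrt)
  have E: "ent2 X = a\<^sup>2 * ent_profile t"
    unfolding X' t_def by (rule ent2_pauli_mat[OF X'(2,3)])
  have "ent2 X > 0"
    using ent_profile_nonneg[OF \<open>0 \<le> t\<close> \<open>t < 1\<close>] X(2) unfolding E by simp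
  have "ent2 X \<le> a\<^sup>2 * t\<^sup>2"
    unfolding E using ent_profile_le_square[OF \<open>0 \<le> t\<close> \<open>t < 1\<close>] by (simp add: mult_left_mono)
  also have "a\<^sup>2 * t\<^sup>2 = x\<^sup>2 + y\<^sup>2 + z\<^sup>2"
    unfolding t_def using X'(2) by (simp add: power_divide)
  finally have "?m * ent2 X \<le> ?m * (x\<^sup>2 + y\<^sup>2 + z\<^sup>2)"
    using assms(1-3) by (intro mult_left_mono) auto
  also have "\<dots> \<le> pauli_form p1 p2 p3 x y z" by (rule pauli_form_ge)
  finally show ?thesis
    using \<open>ent2 X > 0\<close> unfolding X'(1) dirichlet2_pauli_generator by (simp add: pos_le_divide_eq)
qed

lemma pauli_ratio_tendsto:
  assumes "u\<^sup>2 + v\<^sup>2 + w\<^sup>2 = 1"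
  defines "W \<equiv> \<lambda>t. pauli_mat 1 (t * u) (t * v) (t * w)"
  shows "\<forall>\<^sub>F t in at_right 0. posdef_mat 2 (W t) \<and> ent2 (W t) \<noteq> 0"
    and "((\<lambda>t. dirichlet2 (pauli_generator p1 p2 p3) (W t) / ent2 (W t))
           \<longlongrightarrow> 2 * pauli_form p1 p2 p3 u v w) (at_right 0)"
proof -
  have sq: "(t * u)\<^sup>2 + (t * v)\<^sup>2 + (t * w)\<^sup>2 = t\<^sup>2" for t :: real
    using assms(1) by (simp add: power_mult_distrib flip: distrib_left)
  have posdef: "posdef_mat 2 (W t)" and ent: "ent2 (W t) = ent_profile t" if "0 < t" "t < 1" for t
  proof -
    have "(t * u)\<^sup>2 + (t * v)\<^sup>2 + (t * w)\<^sup>2 < 1\<^sup>2"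
      unfolding sq using that by (simp add: power_less_one_iff)
    thus "posdef_mat 2 (W t)" "ent2 (W t) = ent_profile t"
      unfolding W_def using posdef_pauli_mat ent2_pauli_mat[of 1 "t * u" "t * v" "t * w"] that
      by (simp_all add: sq)
  qed
  have ratio: "dirichlet2 (pauli_generator p1 p2 p3) (W t) / ent2 (W t)
             = 2 * pauli_form p1 p2 p3 u v w * (t\<^sup>2 / ent_profile t)" if "0 < t" "t < 1" for t
    unfolding ent[OF that] unfolding W_def dirichlet2_pauli_generator pauli_form_def
    by (simp add: power_mult_distrib algebra_simps add_divide_distrib)
  have ev: "\<forall>\<^sub>F t in at_right (0::real). 0 < t \<and> t < 1"
    by (rule eventually_mono[OF eventually_at_right_real[of 0 1]]) auto
  moreover have "\<forall>\<^sub>F t in at_right 0. t\<^sup>2 / ent_profile t > 1/2"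
    by (rule order_tendstoD(1)[OF ent_profile_asymp]) simp
  ultimately show "\<forall>\<^sub>F t in at_right 0. posdef_mat 2 (W t) \<and> ent2 (W t) \<noteq> 0"
    by eventually_elim (auto simp: posdef ent)
  have "((\<lambda>t. 2 * pauli_form p1 p2 p3 u v w * (t\<^sup>2 / ent_profile t))
          \<longlongrightarrow> 2 * pauli_form p1 p2 p3 u v w) (at_right 0)"
    using tendsto_mult_left[OF ent_profile_asymp, of "2 * pauli_form p1 p2 p3 u v w"] by simp
  thus "((\<lambda>t. dirichlet2 (pauli_generator p1 p2 p3) (W t) / ent2 (W t))
           \<longlongrightarrow> 2 * pauli_form p1 p2 p3 u v w) (at_right 0)"
    by (rule Lim_transform_eventually) (use ev in \<open>auto elim: eventually_mono simp: ratio\<close>)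
qed

section \<open>The log-Sobolev constant\<close>

lemma alpha2_ge:
  assumes "\<exists>X. posdef_mat 2 X \<and> ent2 X \<noteq> 0"
    and "\<forall>X. posdef_mat 2 X \<and> ent2 X \<noteq> 0 \<longrightarrow> c \<le> dirichlet2 L X / ent2 X"
  shows "c \<le> alpha2 L"
  unfolding alpha2_def using assms by (intro cInf_greatest) auto

lemma alpha2_le_limit:
  assumes "\<forall>X. posdef_mat 2 X \<and> ent2 X \<noteq> 0 \<longrightarrow> c \<le> dirichlet2 L X / ent2 X"
    and "\<forall>\<^sub>F t in F. posdef_mat 2 (W t) \<and> ent2 (W t) \<noteq> 0" and "F \<noteq> bot"
    and "((\<lambda>t. dirichlet2 L (W t) / ent2 (W t)) \<longlongrightarrow> l) F"
  shows "alpha2 L \<le> l"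
proof (rule tendsto_lowerbound[OF assms(4) _ assms(3)])
  have "bdd_below {dirichlet2 L X / ent2 X | X. posdef_mat 2 X \<and> ent2 X \<noteq> 0}"
    using assms(1) by (auto simp: bdd_below_def)
  thus "\<forall>\<^sub>F t in F. alpha2 L \<le> dirichlet2 L (W t) / ent2 (W t)"
    using assms(2) unfolding alpha2_def by (auto elim!: eventually_mono intro!: cInf_lower)
qed

theorem mainTheorem17:
  fixes p1 p2 p3 :: real
  assumes "p1 \<ge> 0" "p2 \<ge> 0" "p3 \<ge> 0" "p1 + p2 + p3 \<le> 1"
  shows "alpha2 (pauli_generator p1 p2 p3) = 2 * min (p1 + p2) (min (p2 + p3) (p3 + p1))"
proof -
  let ?L = "pauli_generator p1 p2 p3"
  have lower: "\<forall>X. posdef_mat 2 X \<and> ent2 X \<noteq> 0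
                 \<longrightarrow> 2 * min (p1 + p2) (min (p2 + p3) (p3 + p1)) \<le> dirichlet2 ?L X / ent2 X"
    using pauli_ratio_ge assms(1-3) by blast
  have upper: "alpha2 ?L \<le> 2 * pauli_form p1 p2 p3 u v w" if "u\<^sup>2 + v\<^sup>2 + w\<^sup>2 = 1" for u v w
    using alpha2_le_limit[OF lower pauli_ratio_tendsto(1)[OF that] _ pauli_ratio_tendsto(2)[OF that]] by simp
  have "\<exists>X. posdef_mat 2 X \<and> ent2 X \<noteq> 0"
    using eventually_happens[OF pauli_ratio_tendsto(1)[of 1 0 0]] by auto
  hence "2 * min (p1 + p2) (min (p2 + p3) (p3 + p1)) \<le> alpha2 ?L"
    using alpha2_ge lower by blast
  moreover have "alpha2 ?L \<le> 2 * (p2 + p3)" "alpha2 ?L \<le> 2 * (p1 + p3)" "alpha2 ?L \<le> 2 * (p1 + p2)"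
    using upper[of 1 0 0] upper[of 0 1 0] upper[of 0 0 1] by (simp_all add: pauli_form_def)
  ultimately show ?thesis by (auto simp: min_def)
qed

end
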